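(* For every $n\ge1$, the half space $\mathbb R^n_+=\{x\in\mathbb R^n:x_n\ge0\}$ is isomorphic in the category $\tilde{\mathcal A}$ to the orthant $(\mathbb R_+)^n=[0,\infty)^n\subset\mathbb R^n$; both carry the metric induced from the Euclidean metric of $\mathbb R^n$ and base point the origin. That is, there is a homeomorphism $T:(\mathbb R_+)^n\to\mathbb R^n_+$ such that both $T$ and $T^{-1}$ are morphisms of $\tilde{\mathcal A}$.
   Context: A map $f:X\to Y$ of metric spaces is asymptotically Lipschitz if there are $\lambda,s\ge0$ with $d_Y(f(x),f(x'))\le\lambda d_X(x,x')+s$. Morphisms of $\tilde{\mathcal A}$ between proper metric spaces with base points $x_0,y_0$ are continuous maps that are proper (preimages of compact sets compact), asymptotically Lipschitz, and have nonzero norm: there exist $c>0$, $b\ge 0$ with $d_Y(f(x),y_0)\ge c\,d_X(x,x_0)-b$ for all $x$. *)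

theory Defs
  imports "HOL-Analysis.Analysis"
begin

definition asymp_lipschitz_on :: "'a::metric_space set \<Rightarrow> ('a \<Rightarrow> 'b::metric_space) \<Rightarrow> bool" where
  "asymp_lipschitz_on X f \<longleftrightarrow>
     (\<exists>L s. L \<ge> 0 \<and> s \<ge> 0 \<and> (\<forall>x\<in>X. \<forall>x'\<in>X. dist (f x) (f x') \<le> L * dist x x' + s))"

definition proper_map_on :: "'a::metric_space set \<Rightarrow> 'b::metric_space set \<Rightarrow> ('a \<Rightarrow> 'b) \<Rightarrow> bool" where
  "proper_map_on X Y f \<longleftrightarrow>
     (\<forall>K. K \<subseteq> Y \<and> compact K \<longrightarrow> compact {x \<in> X. f x \<in> K})"

definition nonzero_norm_on :: "'a::metric_space set \<Rightarrow> 'a \<Rightarrow> 'b::metric_space \<Rightarrow> ('a \<Rightarrow> 'b) \<Rightarrow> bool" where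
  "nonzero_norm_on X x0 y0 f \<longleftrightarrow>
     (\<exists>c b. c > 0 \<and> b \<ge> 0 \<and> (\<forall>x\<in>X. dist (f x) y0 \<ge> c * dist x x0 - b))"

definition tildeA_morphism ::
  "'a::metric_space set \<Rightarrow> 'a \<Rightarrow> 'b::metric_space set \<Rightarrow> 'b \<Rightarrow> ('a \<Rightarrow> 'b) \<Rightarrow> bool" where
  "tildeA_morphism X x0 Y y0 f \<longleftrightarrow>
     f ` X \<subseteq> Y \<and> continuous_on X f \<and> proper_map_on X Y f \<and>
     asymp_lipschitz_on X f \<and> nonzero_norm_on X x0 y0 f"

text \<open>The coordinates of R^n are indexed by a finite linearly ordered type; the last
  coordinate x_n is the one at the greatest index.\<close>

definition half_space :: "(real ^ ('n::{finite,linorder})) set" where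
  "half_space = {x. x $ Max (UNIV :: 'n set) \<ge> 0}"

definition orthant :: "(real ^ ('n::finite)) set" where
  "orthant = {x. \<forall>i. x $ i \<ge> 0}"

end

theory Submission
  imports Defs
begin

(* A point x of the orthant is determined by its height h = x_n and by the differences
   x_i - x_n (i < n), which range over the reals \<ge> -h. Keeping the differences and replacing
   x_n by min_i x_i = h + min (0, min_{i<n} (x_i - x_n)) \<ge> 0 maps the orthant bijectively onto
   the half space; the inverse recovers h = y_n - min (0, min_{i<n} y_i). Both maps are built
   from coordinates, differences and minima, so they are Lipschitz and fix the origin. A
   bi-Lipschitz homeomorphism fixing the base points is an isomorphism of tilde-A: it is proper
   because preimages of compacta are images under the continuous inverse, and the Lipschitz
   bound of the inverse is exactly a lower bound of nonzero norm. *)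

lemma homeomorphism_imp_proper_map_on:
  assumes "homeomorphism X Y T S"
  shows "proper_map_on X Y T"
  unfolding proper_map_on_def
proof (intro allI impI)
  fix K assume K: "K \<subseteq> Y \<and> compact K"
  have "continuous_on K S"
    using assms K continuous_on_subset unfolding homeomorphism_def by blast
  with K have "compact (S ` K)"
    by (blast intro: compact_continuous_image)
  moreover have "{x \<in> X. T x \<in> K} = S ` K"
    using assms K unfolding homeomorphism_def by force
  ultimately show "compact {x \<in> X. T x \<in> K}"
    by simp
qed

lemma bi_lipschitz_homeomorphism_imp_tildeA_morphism:
  assumes hom: "homeomorphism X Y T S"
    and lip_T: "L-lipschitz_on X T" and lip_S: "M-lipschitz_on Y S"
    and "x0 \<in> X" and "T x0 = y0"
  shows "tildeA_morphism X x0 Y y0 T"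
proof -
  have "asymp_lipschitz_on X T"
    unfolding asymp_lipschitz_on_def
    using lipschitz_on_nonneg[OF lip_T] lipschitz_onD[OF lip_T]
    by (intro exI[of _ L] exI[of _ 0]) simp
  moreover have "nonzero_norm_on X x0 y0 T"
  proof -
    have "M \<ge> 0"
      using lip_S by (rule lipschitz_on_nonneg)
    have "1 / (M + 1) * dist x x0 \<le> dist (T x) y0" if "x \<in> X" for x
    proof -
      have "dist x x0 = dist (S (T x)) (S (T x0))"
        using hom \<open>x \<in> X\<close> \<open>x0 \<in> X\<close> by (simp add: homeomorphism_apply1)
      also have "\<dots> \<le> M * dist (T x) (T x0)"
        using hom \<open>x \<in> X\<close> \<open>x0 \<in> X\<close> homeomorphism_image1
        by (intro lipschitz_onD[OF lip_S]) blast+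
      also have "\<dots> \<le> (M + 1) * dist (T x) y0"
        using \<open>T x0 = y0\<close> by (simp add: distrib_right)
      finally show ?thesis
        using \<open>M \<ge> 0\<close> by (simp add: divide_le_eq mult.commute)
    qed
    with \<open>M \<ge> 0\<close> show ?thesis
      unfolding nonzero_norm_on_def by (intro exI[of _ "1 / (M + 1)"] exI[of _ 0]) simp
  qed
  ultimately show ?thesis
    unfolding tildeA_morphism_def
    using homeomorphism_image1[OF hom] homeomorphism_cont1[OF hom]
      homeomorphism_imp_proper_map_on[OF hom] by blast
qed

lemma lipschitz_on_vec_nth: "1-lipschitz_on U (\<lambda>x. x $ i)"
  by (rule lipschitz_onI) (simp_all add: dist_vec_nth_le)

lemma lipschitz_on_vec_lambda:
  fixes f :: "'a::metric_space \<Rightarrow> 'n::finite \<Rightarrow> real" and C :: real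
  assumes "\<And>i. C-lipschitz_on U (\<lambda>x. f x i)"
  shows "(CARD('n) * C)-lipschitz_on U (\<lambda>x. \<chi> i. f x i)"
proof (rule lipschitz_onI)
  show "0 \<le> CARD('n) * C"
    using lipschitz_on_nonneg[OF assms] by simp
  fix x y assume "x \<in> U" "y \<in> U"
  have "dist (\<chi> i. f x i) (\<chi> i. f y i)
          \<le> (\<Sum>i\<in>UNIV. \<bar>((\<chi> i. f x i) - (\<chi> i. f y i)) $ i\<bar>)"
    unfolding dist_norm by (rule norm_le_l1_cart)
  also have "\<dots> \<le> (\<Sum>i\<in>(UNIV::'n set). C * dist x y)"
    using lipschitz_onD[OF assms \<open>x \<in> U\<close> \<open>y \<in> U\<close>]
    by (intro sum_mono) (simp add: dist_real_def)
  finally show "dist (\<chi> i. f x i) (\<chi> i. f y i) \<le> CARD('n) * C * dist x y"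
    by simp
qed

lemma Min_range_le_Min_range_add:
  fixes f g :: "'i::finite \<Rightarrow> real"
  assumes "\<And>i. f i \<le> g i + d"
  shows "Min (range f) \<le> Min (range g) + d"
proof -
  have "Min (range g) \<in> range g"
    by (rule Min_in) auto
  then obtain j where "Min (range g) = g j"
    by blast
  moreover have "Min (range f) \<le> f j"
    by (rule Min_le) auto
  ultimately show ?thesis
    using assms[of j] by linarith
qed

lemma lipschitz_on_Min_range:
  fixes f :: "'a::metric_space \<Rightarrow> 'i::finite \<Rightarrow> real"
  assumes "\<And>i. C-lipschitz_on U (\<lambda>x. f x i)"
  shows "C-lipschitz_on U (\<lambda>x. Min (range (f x)))"
proof (rule lipschitz_onI)
  show "0 \<le> C"
    by (rule lipschitz_on_nonneg[OF assms])
  fix x y assume "x \<in> U" "y \<in> U"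
  have "f x i \<le> f y i + C * dist x y" "f y i \<le> f x i + C * dist x y" for i
    using lipschitz_onD[OF assms[of i] \<open>x \<in> U\<close> \<open>y \<in> U\<close>] by (auto simp: dist_real_def)
  then have "Min (range (f x)) \<le> Min (range (f y)) + C * dist x y"
    and "Min (range (f y)) \<le> Min (range (f x)) + C * dist x y"
    by (simp_all add: Min_range_le_Min_range_add)
  then show "dist (Min (range (f x))) (Min (range (f y))) \<le> C * dist x y"
    by (simp add: dist_real_def)
qed

abbreviation last_coord :: "'n::{finite,linorder}"
  where "last_coord \<equiv> Max UNIV"

definition orthant_to_half_space ::
    "real ^ 'n::{finite,linorder} \<Rightarrow> real ^ 'n::{finite,linorder}" where
  "orthant_to_half_space x =
     (\<chi> i. if i = last_coord then Min (range (\<lambda>j. x $ j)) else x $ i - x $ last_coord)"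

definition orthant_height :: "real ^ 'n::{finite,linorder} \<Rightarrow> real" where
  "orthant_height y = y $ last_coord - Min (range (\<lambda>j. if j = last_coord then 0 else y $ j))"

definition half_space_to_orthant ::
    "real ^ 'n::{finite,linorder} \<Rightarrow> real ^ 'n::{finite,linorder}" where
  "half_space_to_orthant y =
     (\<chi> i. if i = last_coord then orthant_height y else y $ i + orthant_height y)"

lemma orthant_to_half_space_in_half_space:
  "x \<in> orthant \<Longrightarrow> orthant_to_half_space x \<in> half_space"
  unfolding orthant_def half_space_def orthant_to_half_space_def
  by (auto intro!: Min.boundedI)

lemma half_space_to_orthant_in_orthant:
  assumes "y \<in> half_space"
  shows "half_space_to_orthant y \<in> orthant"
proof -
  let ?g = "\<lambda>j. if j = last_coord then 0 else y $ j"
  have Min_le: "Min (range ?g) \<le> ?g j" for j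
    by (rule Min_le) auto
  have Min_le_0: "Min (range ?g) \<le> 0"
    using Min_le[of last_coord] by simp
  have Min_le_nth: "Min (range ?g) \<le> y $ j" if "j \<noteq> last_coord" for j
    using Min_le[of j] unfolding if_not_P[OF that] .
  have height: "orthant_height y = y $ last_coord - Min (range ?g)"
    by (simp only: orthant_height_def)
  have last: "y $ last_coord \<ge> 0"
    using assms by (simp add: half_space_def)
  have "orthant_height y \<ge> 0"
    using Min_le_0 height last by linarith
  moreover have "y $ j + orthant_height y \<ge> 0" if "j \<noteq> last_coord" for j
    using Min_le_nth[OF that] height last by linarith
  ultimately show ?thesis
    by (auto simp: orthant_def half_space_to_orthant_def)
qed

lemma orthant_to_half_space_inverse: "orthant_to_half_space (half_space_to_orthant y) = y"
proof -
  let ?g = "\<lambda>j. if j = last_coord then 0 else y $ j"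
  have "(\<lambda>j. half_space_to_orthant y $ j) = (\<lambda>j. ?g j + orthant_height y)"
    by (auto simp: half_space_to_orthant_def)
  then have "Min (range (\<lambda>j. half_space_to_orthant y $ j)) = y $ last_coord"
    by (simp add: Min_add_commute orthant_height_def)
  then show ?thesis
    by (auto simp: orthant_to_half_space_def half_space_to_orthant_def vec_eq_iff)
qed

lemma half_space_to_orthant_inverse: "half_space_to_orthant (orthant_to_half_space x) = x"
proof -
  let ?x = "orthant_to_half_space x"
  have shifted: "(\<lambda>j. if j = last_coord then 0 else ?x $ j) = (\<lambda>j. x $ j + - x $ last_coord)"
    by (auto simp: orthant_to_half_space_def)
  have "orthant_height ?x = x $ last_coord"
    unfolding orthant_height_def shifted Min_add_commute[OF finite_class.finite_UNIV UNIV_not_empty]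
    by (simp add: orthant_to_half_space_def)
  then show ?thesis
    by (auto simp: orthant_to_half_space_def half_space_to_orthant_def vec_eq_iff)
qed

lemma orthant_to_half_space_zero: "orthant_to_half_space 0 = 0"
  by (simp add: orthant_to_half_space_def vec_eq_iff)

lemma half_space_to_orthant_zero: "half_space_to_orthant 0 = 0"
  using half_space_to_orthant_inverse[of 0] by (simp only: orthant_to_half_space_zero)

lemma lipschitz_orthant_to_half_space:
  "(real CARD('n::{finite,linorder}) * 2)-lipschitz_on U
     (orthant_to_half_space :: real ^ 'n::{finite,linorder} \<Rightarrow> _)"
  unfolding orthant_to_half_space_def
proof (rule lipschitz_on_vec_lambda)
  fix i
  show "2-lipschitz_on U (\<lambda>x. if i = last_coord then Min (range (\<lambda>j. x $ j))
                                else x $ i - x $ last_coord)"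
  proof (cases "i = last_coord")
    case True
    have "1-lipschitz_on U (\<lambda>x. Min (range (\<lambda>j. x $ j)))"
      by (intro lipschitz_on_Min_range lipschitz_on_vec_nth)
    then have "2-lipschitz_on U (\<lambda>x. Min (range (\<lambda>j. x $ j)))"
      by (rule lipschitz_on_mono) auto
    with True show ?thesis
      by simp
  next
    case False
    have "(1 + 1)-lipschitz_on U (\<lambda>x. x $ i - x $ last_coord)"
      by (intro lipschitz_on_diff lipschitz_on_vec_nth)
    with False show ?thesis
      by simp
  qed
qed

lemma lipschitz_orthant_height: "2-lipschitz_on U orthant_height"
proof -
  have "1-lipschitz_on U (\<lambda>y. if j = last_coord then 0 else y $ j)" for j
    by (rule lipschitz_onI) (auto simp: dist_vec_nth_le)
  then have "1-lipschitz_on U (\<lambda>y. Min (range (\<lambda>j. if j = last_coord then 0 else y $ j)))"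
    by (rule lipschitz_on_Min_range)
  from lipschitz_on_diff[OF lipschitz_on_vec_nth this] show ?thesis
    unfolding orthant_height_def[abs_def] by simp
qed

lemma lipschitz_half_space_to_orthant:
  "(real CARD('n::{finite,linorder}) * 3)-lipschitz_on U
     (half_space_to_orthant :: real ^ 'n::{finite,linorder} \<Rightarrow> _)"
  unfolding half_space_to_orthant_def
proof (rule lipschitz_on_vec_lambda)
  fix i
  show "3-lipschitz_on U (\<lambda>y. if i = last_coord then orthant_height y
                                else y $ i + orthant_height y)"
  proof (cases "i = last_coord")
    case True
    have "3-lipschitz_on U orthant_height"
      using lipschitz_orthant_height by (rule lipschitz_on_mono) auto
    with True show ?thesis
      by simp
  next
    case False
    have "(1 + 2)-lipschitz_on U (\<lambda>y. y $ i + orthant_height y)"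
      by (intro lipschitz_on_add lipschitz_on_vec_nth lipschitz_orthant_height)
    with False show ?thesis
      by simp
  qed
qed

lemma homeomorphism_orthant_half_space:
  "homeomorphism orthant half_space orthant_to_half_space half_space_to_orthant"
  by (intro homeomorphismI lipschitz_on_continuous_on[OF lipschitz_orthant_to_half_space]
      lipschitz_on_continuous_on[OF lipschitz_half_space_to_orthant])
    (auto simp: orthant_to_half_space_in_half_space half_space_to_orthant_in_orthant
      orthant_to_half_space_inverse half_space_to_orthant_inverse)

theorem lemma4p2:
  shows "\<exists>(T :: real ^ ('n::{finite,linorder}) \<Rightarrow> real ^ ('n::{finite,linorder})) (S :: real ^ ('n::{finite,linorder}) \<Rightarrow> real ^ ('n::{finite,linorder})).
           homeomorphism orthant half_space T S \<and>
           tildeA_morphism orthant 0 half_space 0 T \<and>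
           tildeA_morphism half_space 0 orthant 0 S"
proof (intro exI conjI)
  show "homeomorphism orthant half_space orthant_to_half_space half_space_to_orthant"
    by (rule homeomorphism_orthant_half_space)
  show "tildeA_morphism orthant 0 half_space 0 orthant_to_half_space"
    by (rule bi_lipschitz_homeomorphism_imp_tildeA_morphism[OF homeomorphism_orthant_half_space
          lipschitz_orthant_to_half_space lipschitz_half_space_to_orthant])
      (simp_all add: orthant_def orthant_to_half_space_zero)
  show "tildeA_morphism half_space 0 orthant 0 half_space_to_orthant"
    by (rule bi_lipschitz_homeomorphism_imp_tildeA_morphism[OF
          homeomorphism_symD[OF homeomorphism_orthant_half_space]
          lipschitz_half_space_to_orthant lipschitz_orthant_to_half_space])
      (simp_all add: half_space_def half_space_to_orthant_zero)
qed

end
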